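(* Let $\theta\in\mathbb{R}$, $\mu=e^{\mathrm{i}\pi\theta}$, and let $(\eta_{\alpha\beta})_{\alpha,\beta=1}^4$ be the matrix with rows $(1,1,\bar\mu,\mu)$, $(1,1,\mu,\bar\mu)$, $(\mu,\bar\mu,1,1)$, $(\bar\mu,\mu,1,1)$. Let $\mathcal{A}(\mathbb{C}^4_\theta)$ be the algebra described in the context, let $k\geq 1$, and let $R$ be a complex algebra containing elements $N^\alpha_{br}$ and $M^\beta_{rd}$ for $\alpha,\beta\in\{1,\dots,4\}$, $b,d\in\{1,\dots,k\}$, $r\in\{1,\dots,2k+2\}$. Define, for $b,d=1,\dots,k$, the elements $$(\tau_z\sigma_z)_{bd}:=\sum_{r=1}^{2k+2}\sum_{\alpha,\beta=1}^4 N^\alpha_{br}M^\beta_{rd}\otimes z_\alpha z_\beta\in R\otimes\mathcal{A}(\mathbb{C}^4_\theta).$$ Then $(\tau_z\sigma_z)_{bd}=0$ for all $b,d=1,\dots,k$ if and only if $$\sum_{r=1}^{2k+2}\left(N^\alpha_{br}M^\beta_{rd}+\eta_{\beta\alpha}N^\beta_{br}M^\alpha_{rd}\right)=0$$ for all $b,d=1,\dots,k$ and all $\alpha,\beta=1,\dots,4$.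
   Context: $\mathcal{A}(\mathbb{C}^4_\theta)$ is the unital $*$-algebra generated by $z_1,\dots,z_4$ and $z_1^*,\dots,z_4^*$ subject to the relations $z_jz_l=\eta_{jl}z_lz_j$, $z_jz_l^*=\eta_{lj}z_l^*z_j$, $z_j^*z_l^*=\eta_{jl}z_l^*z_j^*$ for $j,l=1,\dots,4$. Here $\tau_z=\sum_\alpha N^\alpha\otimes z_\alpha$ and $\sigma_z=\sum_\beta M^\beta\otimes z_\beta$ are the algebra-valued $k\times(2k+2)$ and $(2k+2)\times k$ matrices of the two maps of a monad, and $\tau_z\sigma_z$ is their product. *)

theory Defs
  imports Complex_Main "HOL-Library.Poly_Mapping"
begin

class complex_algebra = ring +
  fixes scaleC :: "complex \<Rightarrow> 'a \<Rightarrow> 'a"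
  assumes scaleC_add_right: "scaleC c (x + y) = scaleC c x + scaleC c y"
    and scaleC_add_left: "scaleC (c + e) x = scaleC c x + scaleC e x"
    and scaleC_scaleC: "scaleC c (scaleC e x) = scaleC (c * e) x"
    and scaleC_one: "scaleC 1 x = x"
    and mult_scaleC_left: "scaleC c x * y = scaleC c (x * y)"
    and mult_scaleC_right: "x * scaleC c y = scaleC c (x * y)"

definition mu :: "real \<Rightarrow> complex" where
  "mu \<theta> = exp (\<i> * of_real pi * of_real \<theta>)"

definition eta :: "real \<Rightarrow> nat \<Rightarrow> nat \<Rightarrow> complex" where
  "eta \<theta> a b =
     (let m = mu \<theta>; mb = cnj (mu \<theta>)
      in [[1, 1, mb, m], [1, 1, m, mb], [m, mb, 1, 1], [mb, m, 1, 1]] ! (a - 1) ! (b - 1))"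

text \<open>Generators z_j and z_j^* of the free *-algebra.\<close>
datatype gen = Z nat | Zs nat

fun gidx :: "gen \<Rightarrow> nat" where
  "gidx (Z j) = j" | "gidx (Zs j) = j"

definition valid_word :: "gen list \<Rightarrow> bool" where
  "valid_word w \<longleftrightarrow> (\<forall>g\<in>set w. gidx g \<in> {1..4})"

text \<open>Defining relations (p, q, c), meaning p - c q = 0 in A(C^4_theta).\<close>
definition rels :: "real \<Rightarrow> (gen list \<times> gen list \<times> complex) set" where
  "rels \<theta> =
     {([Z j, Z l], [Z l, Z j], eta \<theta> j l) | j l. j \<in> {1..4} \<and> l \<in> {1..4}} \<union>
     {([Z j, Zs l], [Zs l, Z j], eta \<theta> l j) | j l. j \<in> {1..4} \<and> l \<in> {1..4}} \<union>
     {([Zs j, Zs l], [Zs l, Zs j], eta \<theta> j l) | j l. j \<in> {1..4} \<and> l \<in> {1..4}}"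

text \<open>R \<otimes> (free algebra) is modelled as finitely supported maps from words to R,
the pure tensor r \<otimes> w being single w r. The elements r \<otimes> (u (p - c q) v) span
R \<otimes> I, where I is the two-sided ideal generated by the relations.\<close>
definition ideal_gens :: "real \<Rightarrow> (gen list \<Rightarrow>\<^sub>0 'r::complex_algebra) set" where
  "ideal_gens \<theta> = {Poly_Mapping.single (u @ p @ v) r - Poly_Mapping.single (u @ q @ v) (scaleC c r)
      | u v p q c r. valid_word u \<and> valid_word v \<and> (p, q, c) \<in> rels \<theta>}"

inductive_set tensor_ideal :: "real \<Rightarrow> (gen list \<Rightarrow>\<^sub>0 'r::complex_algebra) set" for \<theta> where
  zero: "0 \<in> tensor_ideal \<theta>"
| add: "x \<in> ideal_gens \<theta> \<Longrightarrow> y \<in> tensor_ideal \<theta> \<Longrightarrow> x + y \<in> tensor_ideal \<theta>"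

text \<open>Since R \<otimes> (Free / I) = (R \<otimes> Free) / (R \<otimes> I) over the field C, an element of
R \<otimes> Free vanishes in R \<otimes> A(C^4_theta) iff it lies in R \<otimes> I.\<close>
definition vanishes_in_RA :: "real \<Rightarrow> (gen list \<Rightarrow>\<^sub>0 'r::complex_algebra) \<Rightarrow> bool" where
  "vanishes_in_RA \<theta> X \<longleftrightarrow> X \<in> tensor_ideal \<theta>"

definition tauSigma :: "(nat \<Rightarrow> nat \<Rightarrow> nat \<Rightarrow> 'r::complex_algebra) \<Rightarrow> (nat \<Rightarrow> nat \<Rightarrow> nat \<Rightarrow> 'r)
    \<Rightarrow> nat \<Rightarrow> nat \<Rightarrow> nat \<Rightarrow> (gen list \<Rightarrow>\<^sub>0 'r)" where
  "tauSigma N M k b d =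
     (\<Sum>r\<in>{1..2*k+2}. \<Sum>\<alpha>\<in>{1..4}. \<Sum>\<beta>\<in>{1..4}.
        Poly_Mapping.single [Z \<alpha>, Z \<beta>] (N \<alpha> b r * M \<beta> r d))"

end

theory Submission
  imports Defs
begin

text \<open>Only the degree-two words z_a z_c of the tensor ideal matter here, and these come
solely from the relations z_j z_l - eta(j,l) z_l z_j themselves. Since eta(a,c) eta(c,a) = 1
and eta(a,a) = 1, the twisted coefficient X(a,c) + eta(c,a) X(c,a) kills every generator of
the ideal, which gives necessity. Conversely, if the coefficients A of a quadratic element
satisfy A(a,c) + eta(c,a) A(c,a) = 0, then summing the relations weighted by A/2 over all
pairs (a, c) reproduces the element.\<close>

lemma mu_times_cnj_mu: "mu \<theta> * cnj (mu \<theta>) = 1"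
proof -
  have "mu \<theta> = cis (pi * \<theta>)"
    unfolding mu_def by (simp add: cis_conv_exp mult.assoc)
  then show ?thesis by (simp add: complex_eq_iff power2_eq_square[symmetric])
qed

lemma eta_mult_eta_swap:
  assumes "a \<in> {1..4}" "b \<in> {1..4}"
  shows "eta \<theta> a b * eta \<theta> b a = 1"
  using assms mu_times_cnj_mu[of \<theta>]
  by (auto simp: eta_def Let_def eval_nat_numeral le_Suc_eq mult.commute)

lemma eta_diag: "a \<in> {1..4} \<Longrightarrow> eta \<theta> a a = 1"
  by (auto simp: eta_def eval_nat_numeral le_Suc_eq)

context complex_algebra begin

lemma scaleC_zero_right [simp]: "scaleC c 0 = 0"
  using scaleC_add_right[of c 0 0] by simp

lemma scaleC_minus_right: "scaleC c (- x) = - scaleC c x"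
  using scaleC_add_right[of c x "- x"] by (simp add: eq_neg_iff_add_eq_0 add.commute)

lemma scaleC_sum_right: "scaleC c (sum f S) = (\<Sum>i\<in>S. scaleC c (f i))"
  by (induction S rule: infinite_finite_induct) (auto simp: scaleC_add_right)

lemma scaleC_half_add_half: "scaleC (1/2) x + scaleC (1/2) x = x"
  by (simp add: scaleC_add_left[symmetric] scaleC_one)

end

lemma tensor_ideal_add:
  "x \<in> tensor_ideal \<theta> \<Longrightarrow> y \<in> tensor_ideal \<theta> \<Longrightarrow> x + y \<in> tensor_ideal \<theta>"
  by (induction rule: tensor_ideal.induct) (auto simp: add.assoc intro: tensor_ideal.add)

lemma tensor_ideal_sum:
  "(\<And>i. i \<in> S \<Longrightarrow> f i \<in> tensor_ideal \<theta>) \<Longrightarrow> sum f S \<in> tensor_ideal \<theta>"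
  by (induction S rule: infinite_finite_induct) (auto intro: tensor_ideal.zero tensor_ideal_add)

lemma ideal_gens_subset_tensor_ideal: "ideal_gens \<theta> \<subseteq> tensor_ideal \<theta>"
  using tensor_ideal.add[OF _ tensor_ideal.zero] by auto

definition twisted_coeff :: "real \<Rightarrow> nat \<Rightarrow> nat \<Rightarrow> (gen list \<Rightarrow>\<^sub>0 'r::complex_algebra) \<Rightarrow> 'r" where
  "twisted_coeff \<theta> a c X =
     Poly_Mapping.lookup X [Z a, Z c] + scaleC (eta \<theta> c a) (Poly_Mapping.lookup X [Z c, Z a])"

lemma twisted_coeff_commutation_relation:
  assumes a: "a \<in> {1..4}" and c: "c \<in> {1..4}"
  shows "twisted_coeff \<theta> a c
    (Poly_Mapping.single [Z j, Z l] r - Poly_Mapping.single [Z l, Z j] (scaleC (eta \<theta> j l) r)) = 0"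
proof -
  have eta_ac: "scaleC (eta \<theta> c a) (scaleC (eta \<theta> a c) y) = y" for y
    using eta_mult_eta_swap[OF c a, of \<theta>] by (simp add: scaleC_scaleC scaleC_one)
  consider "j = a" "l = a" "a = c" | "j = a" "l = c" "a \<noteq> c" | "j = c" "l = a" "a \<noteq> c"
    | "{j, l} \<noteq> {a, c}"
    by (metis doubleton_eq_iff insert_absorb2)
  then show ?thesis
  proof cases
    case 1
    then show ?thesis
      using eta_diag[OF c, of \<theta>]
      by (simp add: twisted_coeff_def lookup_minus lookup_single scaleC_one)
  next
    case 2
    then show ?thesis
      by (simp add: twisted_coeff_def lookup_minus lookup_single eta_ac scaleC_minus_right)
  next
    case 3
    then show ?thesis by (simp add: twisted_coeff_def lookup_minus lookup_single)
  next
    case 4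
    then have "[Z j, Z l] \<notin> {[Z a, Z c], [Z c, Z a]}" "[Z l, Z j] \<notin> {[Z a, Z c], [Z c, Z a]}"
      by auto
    then show ?thesis by (simp add: twisted_coeff_def lookup_minus lookup_single)
  qed
qed

lemma twisted_coeff_ideal_gens:
  assumes x: "x \<in> ideal_gens \<theta>" and a: "a \<in> {1..4}" and c: "c \<in> {1..4}"
  shows "twisted_coeff \<theta> a c x = 0"
proof -
  obtain u v p q e r
    where x_eq: "x = Poly_Mapping.single (u @ p @ v) r - Poly_Mapping.single (u @ q @ v) (scaleC e r)"
      and rel: "(p, q, e) \<in> rels \<theta>"
    using x unfolding ideal_gens_def by blast
  have lookup_x:
    "Poly_Mapping.lookup x w = (r when u @ p @ v = w) - (scaleC e r when u @ q @ v = w)" for w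
    by (simp add: x_eq lookup_minus lookup_single)
  from rel consider (commute_Z) j l where "p = [Z j, Z l]" "q = [Z l, Z j]" "e = eta \<theta> j l"
    | (star) l where "Zs l \<in> set p" "Zs l \<in> set q"
    unfolding rels_def by (auto; metis list.set_intros)
  then show ?thesis
  proof cases
    case star
    then have "u @ p @ v \<noteq> [Z a', Z c']" "u @ q @ v \<noteq> [Z a', Z c']" for a' c'
      by (metis Un_iff empty_iff gen.distinct(1) set_ConsD set_append set_empty)+
    then show ?thesis by (simp add: twisted_coeff_def lookup_x)
  next
    case commute_Z
    show ?thesis
    proof (cases "u = [] \<and> v = []")
      case True
      then show ?thesis
        using twisted_coeff_commutation_relation[OF a c] by (simp add: x_eq commute_Z)
    next
      case False
      then have "length (u @ p @ v) \<noteq> 2" "length (u @ q @ v) \<noteq> 2"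
        using commute_Z by auto
      then have "u @ p @ v \<noteq> [Z a', Z c']" "u @ q @ v \<noteq> [Z a', Z c']" for a' c'
        by (metis length_Cons list.size(3) numeral_2_eq_2)+
      then show ?thesis by (simp add: twisted_coeff_def lookup_x)
    qed
  qed
qed

lemma twisted_coeff_tensor_ideal:
  assumes "X \<in> tensor_ideal \<theta>" "a \<in> {1..4}" "c \<in> {1..4}"
  shows "twisted_coeff \<theta> a c X = 0"
  using assms(1)
proof induction
  case zero
  then show ?case by (simp add: twisted_coeff_def)
next
  case (add x y)
  have "twisted_coeff \<theta> a c (x + y) = twisted_coeff \<theta> a c x + twisted_coeff \<theta> a c y"
    by (simp add: twisted_coeff_def lookup_add scaleC_add_right algebra_simps)
  with twisted_coeff_ideal_gens[OF add.hyps(1) assms(2,3)] add.IH show ?case by simp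
qed

definition quadratic_element :: "(nat \<Rightarrow> nat \<Rightarrow> 'r::complex_algebra) \<Rightarrow> (gen list \<Rightarrow>\<^sub>0 'r)" where
  "quadratic_element A = (\<Sum>a\<in>{1..4}. \<Sum>c\<in>{1..4}. Poly_Mapping.single [Z a, Z c] (A a c))"

lemma lookup_quadratic_element:
  assumes "a \<in> {1..4}" "c \<in> {1..4}"
  shows "Poly_Mapping.lookup (quadratic_element A) [Z a, Z c] = A a c"
proof -
  have "Poly_Mapping.lookup (quadratic_element A) [Z a, Z c]
      = (\<Sum>a'\<in>{1..4}. \<Sum>c'\<in>{1..4}. if a' = a \<and> c' = c then A a' c' else 0)"
    by (simp add: quadratic_element_def lookup_sum lookup_single when_def)
  also have "\<dots> = (\<Sum>a'\<in>{1..4}. if a' = a then \<Sum>c'\<in>{1..4}. if c' = c then A a' c' else 0 else 0)"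
    by (intro sum.cong) auto
  also have "\<dots> = A a c"
    using assms by simp
  finally show ?thesis .
qed

lemma quadratic_element_add:
  "quadratic_element (\<lambda>a c. A a c + B a c) = quadratic_element A + quadratic_element B"
  by (simp add: quadratic_element_def single_add sum.distrib)

lemma quadratic_element_in_tensor_ideal:
  assumes twisted_antisym:
    "\<And>a c. a \<in> {1..4} \<Longrightarrow> c \<in> {1..4} \<Longrightarrow> A a c + scaleC (eta \<theta> c a) (A c a) = 0"
  shows "quadratic_element A \<in> tensor_ideal \<theta>"
proof -
  define H where "H a c = scaleC (1/2) (A a c)" for a c
  define G where "G a c = Poly_Mapping.single [Z a, Z c] (H a c)
      - Poly_Mapping.single [Z c, Z a] (scaleC (eta \<theta> a c) (H a c))" for a c
  have G_gen: "G a c \<in> ideal_gens \<theta>" if "a \<in> {1..4}" "c \<in> {1..4}" for a c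
  proof -
    have "([Z a, Z c], [Z c, Z a], eta \<theta> a c) \<in> rels \<theta>"
      unfolding rels_def using that by blast
    moreover have "valid_word []" by (simp add: valid_word_def)
    moreover have "G a c = Poly_Mapping.single ([] @ [Z a, Z c] @ []) (H a c)
        - Poly_Mapping.single ([] @ [Z c, Z a] @ []) (scaleC (eta \<theta> a c) (H a c))"
      by (simp add: G_def)
    ultimately show ?thesis
      unfolding ideal_gens_def by blast
  qed
  have H_twisted: "scaleC (eta \<theta> a c) (H a c) = - H c a" if "a \<in> {1..4}" "c \<in> {1..4}" for a c
  proof -
    have "scaleC (eta \<theta> a c) (A a c) = - A c a"
      using twisted_antisym[OF that(2,1)] by (simp add: eq_neg_iff_add_eq_0 add.commute)
    then show ?thesis
      by (metis H_def mult.commute scaleC_minus_right scaleC_scaleC)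
  qed
  have "(\<Sum>a\<in>{1..4}. \<Sum>c\<in>{1..4}. G a c) = quadratic_element H
      - (\<Sum>a\<in>{1..4}. \<Sum>c\<in>{1..4}.
           Poly_Mapping.single [Z c, Z a] (scaleC (eta \<theta> a c) (H a c)))"
    by (simp only: G_def quadratic_element_def sum_subtractf)
  also have "\<dots> = quadratic_element H
      - (\<Sum>a\<in>{1..4}. \<Sum>c\<in>{1..4}. Poly_Mapping.single [Z c, Z a] (- H c a))"
    by (intro arg_cong2[where f = minus] sum.cong refl) (simp add: H_twisted)
  also have "\<dots> = quadratic_element H + quadratic_element H"
    by (subst sum.swap) (simp add: quadratic_element_def single_uminus sum_negf)
  also have "\<dots> = quadratic_element A"
    by (simp add: H_def scaleC_half_add_half flip: quadratic_element_add)
  finally have "quadratic_element A = (\<Sum>a\<in>{1..4}. \<Sum>c\<in>{1..4}. G a c)" ..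
  then show ?thesis
    by (auto intro!: tensor_ideal_sum G_gen[THEN subsetD[OF ideal_gens_subset_tensor_ideal]])
qed

lemma quadratic_element_in_tensor_ideal_iff:
  "quadratic_element A \<in> tensor_ideal \<theta> \<longleftrightarrow>
     (\<forall>a\<in>{1..4}. \<forall>c\<in>{1..4}. A a c + scaleC (eta \<theta> c a) (A c a) = 0)"
proof
  assume "quadratic_element A \<in> tensor_ideal \<theta>"
  then show "\<forall>a\<in>{1..4}. \<forall>c\<in>{1..4}. A a c + scaleC (eta \<theta> c a) (A c a) = 0"
    using twisted_coeff_tensor_ideal
    by (fastforce simp: twisted_coeff_def lookup_quadratic_element)
qed (use quadratic_element_in_tensor_ideal in blast)

lemma single_sum: "Poly_Mapping.single k (sum f S) = (\<Sum>i\<in>S. Poly_Mapping.single k (f i))"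
  by (induction S rule: infinite_finite_induct) (auto simp: single_add)

lemma tauSigma_eq_quadratic_element:
  "tauSigma N M k b d = quadratic_element (\<lambda>\<alpha> \<beta>. \<Sum>r\<in>{1..2*k+2}. N \<alpha> b r * M \<beta> r d)"
proof -
  have "tauSigma N M k b d = (\<Sum>\<alpha>\<in>{1..4}. \<Sum>\<beta>\<in>{1..4}. \<Sum>r\<in>{1..2*k+2}.
        Poly_Mapping.single [Z \<alpha>, Z \<beta>] (N \<alpha> b r * M \<beta> r d))"
    unfolding tauSigma_def by (subst sum.swap, subst sum.swap) (rule refl)
  then show ?thesis
    by (simp only: quadratic_element_def single_sum)
qed

theorem proposition4p3:
  fixes \<theta> :: real and k :: nat
    and N M :: "nat \<Rightarrow> nat \<Rightarrow> nat \<Rightarrow> 'r::complex_algebra"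
  assumes "k \<ge> 1"
  shows "(\<forall>b\<in>{1..k}. \<forall>d\<in>{1..k}. vanishes_in_RA \<theta> (tauSigma N M k b d)) \<longleftrightarrow>
         (\<forall>b\<in>{1..k}. \<forall>d\<in>{1..k}. \<forall>\<alpha>\<in>{1..4}. \<forall>\<beta>\<in>{1..4}.
            (\<Sum>r\<in>{1..2*k+2}. N \<alpha> b r * M \<beta> r d + scaleC (eta \<theta> \<beta> \<alpha>) (N \<beta> b r * M \<alpha> r d)) = 0)"
proof -
  have "vanishes_in_RA \<theta> (tauSigma N M k b d) \<longleftrightarrow>
      (\<forall>\<alpha>\<in>{1..4}. \<forall>\<beta>\<in>{1..4}.
         (\<Sum>r\<in>{1..2*k+2}. N \<alpha> b r * M \<beta> r d + scaleC (eta \<theta> \<beta> \<alpha>) (N \<beta> b r * M \<alpha> r d)) = 0)"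
    for b d
    \<comment> \<open>holds for every k\<close>
    unfolding vanishes_in_RA_def tauSigma_eq_quadratic_element quadratic_element_in_tensor_ideal_iff
    by (simp only: sum.distrib scaleC_sum_right)
  then show ?thesis by blast
qed

end
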